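(* Let $S$ be a finite generating $2$-separable subset of an abelian group $G$ with $1\in S$ and $\mu(S)\le0$. Assume moreover that $|S|\ne|G|-6$ if $\mu(S)=0$. Let $M$ be a $2$-atom of $S$ with $1\in M$ which is not a subgroup. Then $|M|=2$.
   Context: For a group $G$ and $S\subseteq G$, $\mathrm{Cay}(G,S)$ is the graph on $G$ with arcs $(x,y)$, $x^{-1}y\in S$; the image of $X$ is $XS$. For a reflexive locally finite graph $\Gamma=(V,E)$, $\partial(X)=\Gamma(X)\setminus X$; $\Gamma$ is $k$-separable if some finite $X$ has $|X|\ge k$ and $|V\setminus\Gamma(X)|\ge k$; then $\kappa_k(\Gamma)=\min\{|\partial(X)|: X\text{ finite},|X|\ge k,|V\setminus\Gamma(X)|\ge k\}$, a $k$-fragment is such an $X$ attaining the minimum, and a $k$-atom is a $k$-fragment of minimum cardinality. For $S$ with $1\in S$, these notions for $S$ refer to $\mathrm{Cay}(\langle S\rangle,S)$; $S$ is $k$-separable if this graph is. The defect is $\mu(S)=\kappa_2(S)-|S|$. (If $G$ is infinite, the condition $|S|\ne|G|-6$ is automatic.) *)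

theory Defs
  imports "HOL-Algebra.Algebra"
begin

text \<open>Cayley graph Cay(<S>, S): vertex set <S> = generate Grp S, arcs (x, x s), s in S.
  The image (out-neighbourhood) of A is XS.\<close>

definition cay_image :: "('a, 'b) monoid_scheme \<Rightarrow> 'a set \<Rightarrow> 'a set \<Rightarrow> 'a set" where
  "cay_image Grp S A = (\<lambda>(x, s). x \<otimes>\<^bsub>Grp\<^esub> s) ` (A \<times> S)"

definition cay_boundary :: "('a, 'b) monoid_scheme \<Rightarrow> 'a set \<Rightarrow> 'a set \<Rightarrow> 'a set" where
  "cay_boundary Grp S A = cay_image Grp S A - A"

definition card_ge :: "'a set \<Rightarrow> nat \<Rightarrow> bool" where
  "card_ge A k \<longleftrightarrow> infinite A \<or> k \<le> card A"

definition k_admissible :: "('a, 'b) monoid_scheme \<Rightarrow> 'a set \<Rightarrow> nat \<Rightarrow> 'a set \<Rightarrow> bool" where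
  "k_admissible Grp S k A \<longleftrightarrow> A \<subseteq> generate Grp S \<and> finite A \<and> k \<le> card A
     \<and> card_ge (generate Grp S - cay_image Grp S A) k"

definition k_separable :: "('a, 'b) monoid_scheme \<Rightarrow> 'a set \<Rightarrow> nat \<Rightarrow> bool" where
  "k_separable Grp S k \<longleftrightarrow> (\<exists>A. k_admissible Grp S k A)"

definition kappa :: "('a, 'b) monoid_scheme \<Rightarrow> 'a set \<Rightarrow> nat \<Rightarrow> nat" where
  "kappa Grp S k = (LEAST n. \<exists>A. k_admissible Grp S k A \<and> card (cay_boundary Grp S A) = n)"

definition k_fragment :: "('a, 'b) monoid_scheme \<Rightarrow> 'a set \<Rightarrow> nat \<Rightarrow> 'a set \<Rightarrow> bool" where
  "k_fragment Grp S k A \<longleftrightarrow> k_admissible Grp S k A \<and> card (cay_boundary Grp S A) = kappa Grp S k"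

definition k_atom :: "('a, 'b) monoid_scheme \<Rightarrow> 'a set \<Rightarrow> nat \<Rightarrow> 'a set \<Rightarrow> bool" where
  "k_atom Grp S k A \<longleftrightarrow> k_fragment Grp S k A \<and> (\<forall>B. k_fragment Grp S k B \<longrightarrow> card A \<le> card B)"

definition defect :: "('a, 'b) monoid_scheme \<Rightarrow> 'a set \<Rightarrow> int" where
  "defect Grp S = int (kappa Grp S 2) - int (card S)"

end

theory Submission
  imports Defs
begin

(* For a finite set A write e(A) = |AS| - |A| for its excess; for finite A this is the size of
   the boundary of A in Cay(<S>, S). The excess is submodular and translation invariant, and
   kappa_2 is the least excess of a 2-admissible set; the defect hypothesis says kappa_2 <= |S|.

   1. General facts on Cayley images in an abelian group (locale abelian_cayley), including a
      duality: the image of the reflected complement g (G - QS)^-1 misses g Q^-1.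
   2. For a 2-atom M containing 1 (locale cayley_atom): admissible sets smaller than M have
      excess > kappa_2, duality bounds |G| from below, and distinct translates of M meet in at
      most one point. If M is not a subgroup (locale cayley_nonsubgroup_atom) this holds for all
      translates Mg with g <> 1, so M is a Sidon set.
   3. Counting the quotients c m^-1 with c outside MS: if |M| >= 3, |G| <= 3|M| - 2 + kappa_2
      and |MM| >= 3|M| - 3, then |M| = 3, kappa_2 = |S| and |G| = |S| + 6.
   4. Unions of translates M, Mx, My (and Mz) of small excess show that every atom with
      |M| >= 3 satisfies these bounds; for |M| = 3 this needs y^3 = 1 in one subcase.
   Since |M| >= 2, an atom with |M| <> 2 would give defect 0 and |S| = |G| - 6, which the
   hypotheses exclude. *)

lemma (in comm_group) div_eq_div_iff:
  assumes "a \<in> carrier G" "b \<in> carrier G" "c \<in> carrier G" "d \<in> carrier G"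
  shows "a \<otimes> inv b = c \<otimes> inv d \<longleftrightarrow> a \<otimes> d = c \<otimes> b"
proof -
  have cancel: "(x \<otimes> inv y) \<otimes> (b \<otimes> d) = x \<otimes> z"
    if "x \<in> carrier G" "y \<in> carrier G" "z \<in> carrier G" "b \<otimes> d = y \<otimes> z" for x y z
    using that by (simp add: m_assoc[symmetric]) (simp add: m_assoc)
  have "a \<otimes> inv b = c \<otimes> inv d \<longleftrightarrow> (a \<otimes> inv b) \<otimes> (b \<otimes> d) = (c \<otimes> inv d) \<otimes> (b \<otimes> d)"
    using assms by simp
  also have "\<dots> \<longleftrightarrow> a \<otimes> d = c \<otimes> b"
    using assms cancel[of a b d] cancel[of c d b] by (simp add: m_comm)
  finally show ?thesis .
qed

lemma (in group) inj_on_div: "g \<in> carrier G \<Longrightarrow> inj_on (\<lambda>m. g \<otimes> inv m) (carrier G)"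
  by (rule inj_onI) (metis Units_eq Units_l_cancel inv_closed inv_inv)

lemma (in group) inj_on_shift: "g \<in> carrier G \<Longrightarrow> inj_on (\<lambda>a. a \<otimes> g) (carrier G)"
  by (rule inj_onI) simp

lemma (in group) inj_on_lmult: "g \<in> carrier G \<Longrightarrow> inj_on (\<lambda>a. g \<otimes> a) (carrier G)"
  by (rule inj_onI) (metis inv_closed l_inv l_one m_assoc)

text \<open>If right multiplication by \<open>y\<close> permutes a finite set \<open>P\<close>, then \<open>y\<^sup>|\<^sup>P\<^sup>| = \<one>\<close>:
  compare the products of the elements of \<open>P\<close> and of \<open>Py\<close>.\<close>
lemma (in comm_group) pow_card_of_stable_set:
  assumes P: "finite P" "P \<subseteq> carrier G" and y: "y \<in> carrier G" and stable: "(\<lambda>p. p \<otimes> y) ` P = P"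
  shows "y [^] card P = \<one>"
proof -
  have PG: "(\<lambda>p. p) \<in> P \<rightarrow> carrier G" using P by auto
  have "finprod G (\<lambda>p. p) P = finprod G (\<lambda>p. p) ((\<lambda>p. p \<otimes> y) ` P)" using stable by simp
  also have "\<dots> = finprod G (\<lambda>p. p \<otimes> y) P"
    using P y by (intro finprod_reindex inj_on_subset[OF inj_on_shift]) auto
  also have "\<dots> = finprod G (\<lambda>p. p) P \<otimes> y [^] card P"
    using finprod_multf[OF PG, of "\<lambda>_. y"] finprod_const[OF y, of P] y by simp
  finally show ?thesis using PG y by simp
qed

lemma exists_not_in_smaller: "finite F \<Longrightarrow> card F < card A \<Longrightarrow> \<exists>a\<in>A. a \<notin> F"
  using card_mono by (metis leD subsetI)

lemma card_ge_mono: "card_ge A k \<Longrightarrow> A \<subseteq> B \<Longrightarrow> card_ge B k"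
  unfolding card_ge_def by (meson card_mono infinite_super le_trans)

lemma card_ge_finite: "card_ge A k \<Longrightarrow> finite A \<Longrightarrow> k \<le> card A"
  unfolding card_ge_def by auto

lemma card_ge_image: "inj_on f A \<Longrightarrow> card_ge A k \<Longrightarrow> card_ge (f ` A) k"
  unfolding card_ge_def by (simp add: card_image finite_image_iff)

locale abelian_cayley = comm_group G for G (structure) +
  fixes S :: "'a set"
  assumes finite_S: "finite S" and S_carrier: "S \<subseteq> carrier G" and one_in_S: "\<one> \<in> S"
    and S_generates: "generate G S = carrier G"
begin

abbreviation img :: "'a set \<Rightarrow> 'a set" where "img \<equiv> cay_image G S"
abbreviation admissible :: "'a set \<Rightarrow> bool" where "admissible \<equiv> k_admissible G S 2"
abbreviation kappa2 :: nat where "kappa2 \<equiv> kappa G S 2"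

definition excess :: "'a set \<Rightarrow> int" where
  "excess A = int (card (img A)) - int (card A)"

definition shift :: "'a \<Rightarrow> 'a set \<Rightarrow> 'a set" where
  "shift g A = (\<lambda>a. a \<otimes> g) ` A"

lemma img_iff: "z \<in> img A \<longleftrightarrow> (\<exists>a\<in>A. \<exists>s\<in>S. z = a \<otimes> s)"
  unfolding cay_image_def by auto

lemma img_carrier: "A \<subseteq> carrier G \<Longrightarrow> img A \<subseteq> carrier G"
  using S_carrier by (auto simp: img_iff intro!: m_closed)

lemma finite_img: "finite A \<Longrightarrow> finite (img A)"
  unfolding cay_image_def using finite_S by auto

lemma subset_img: "A \<subseteq> carrier G \<Longrightarrow> A \<subseteq> img A"
  using one_in_S by (force simp: img_iff)

lemma img_mono: "A \<subseteq> B \<Longrightarrow> img A \<subseteq> img B"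
  unfolding cay_image_def by blast

lemma img_Un: "img (A \<union> B) = img A \<union> img B"
  unfolding cay_image_def by blast

lemma img_Int: "img (A \<inter> B) \<subseteq> img A \<inter> img B"
  unfolding cay_image_def by blast

lemma img_singleton: "a \<in> carrier G \<Longrightarrow> img {a} = (\<lambda>s. a \<otimes> s) ` S"
  unfolding cay_image_def by auto

lemma img_one: "img {\<one>} = S"
  using img_singleton[of \<one>] S_carrier by (force simp: image_iff)

lemma card_img_singleton: "a \<in> carrier G \<Longrightarrow> card (img {a}) = card S"
proof -
  assume a: "a \<in> carrier G"
  have "inj_on (\<lambda>s. a \<otimes> s) S"
    using inj_on_subset[OF inj_on_lmult[OF a] S_carrier] .
  thus ?thesis using img_singleton[OF a] card_image by simp
qed

lemma card_img_eq: "int (card (img A)) = int (card A) + excess A"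
  unfolding excess_def by simp

lemma excess_singleton: "a \<in> carrier G \<Longrightarrow> excess {a} = int (card S) - 1"
  unfolding excess_def using card_img_singleton by simp

lemma card_boundary: "finite A \<Longrightarrow> A \<subseteq> carrier G \<Longrightarrow> int (card (cay_boundary G S A)) = excess A"
  unfolding cay_boundary_def excess_def
  by (simp add: card_Diff_subset card_mono finite_img subset_img of_nat_diff)

lemma excess_submodular:
  assumes "finite A" "finite B"
  shows "excess (A \<union> B) + excess (A \<inter> B) \<le> excess A + excess B"
proof -
  have fin: "finite (img A)" "finite (img B)" using assms finite_img by auto
  have "card (img (A \<inter> B)) \<le> card (img A \<inter> img B)"
    using fin img_Int by (meson card_mono finite_Int)
  moreover have "card (img A \<union> img B) + card (img A \<inter> img B) = card (img A) + card (img B)"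
    using card_Un_Int[OF fin] by simp
  moreover have "card (A \<union> B) + card (A \<inter> B) = card A + card B"
    using card_Un_Int[OF assms] by simp
  ultimately show ?thesis unfolding excess_def img_Un by linarith
qed

lemma admissible_iff:
  "admissible A \<longleftrightarrow> A \<subseteq> carrier G \<and> finite A \<and> 2 \<le> card A \<and> card_ge (carrier G - img A) 2"
  unfolding k_admissible_def S_generates by auto

lemma admissible_subset: "admissible B \<Longrightarrow> A \<subseteq> B \<Longrightarrow> 2 \<le> card A \<Longrightarrow> admissible A"
  unfolding admissible_iff
  by (meson Diff_mono card_ge_mono dual_order.trans finite_subset img_mono order_refl)

lemma kappa_le_excess: "admissible A \<Longrightarrow> int kappa2 \<le> excess A"
proof -
  assume A: "admissible A"
  have "kappa2 \<le> card (cay_boundary G S A)"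
    unfolding kappa_def by (rule Least_le) (use A in blast)
  thus ?thesis using A card_boundary admissible_iff by fastforce
qed

lemma not_admissible_bound:
  assumes "A \<subseteq> carrier G" "finite A" "2 \<le> card A" "\<not> admissible A"
  shows "finite (carrier G) \<and> int (card (carrier G)) \<le> int (card A) + excess A + 1"
proof -
  have "\<not> card_ge (carrier G - img A) 2" using assms admissible_iff by blast
  hence rest: "finite (carrier G - img A)" "card (carrier G - img A) \<le> 1"
    unfolding card_ge_def by auto
  have split: "carrier G = img A \<union> (carrier G - img A)" using img_carrier assms by blast
  have "finite (carrier G)" using split rest finite_img[OF assms(2)] by (metis finite_UnI)
  moreover have "card (carrier G) \<le> card (img A) + card (carrier G - img A)"
    using split card_Un_le by metis
  ultimately show ?thesis using rest card_img_eq[of A] by linarith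
qed

lemma excess_below_kappa_bound:
  assumes "A \<subseteq> carrier G" "finite A" "2 \<le> card A" "excess A < int kappa2"
  shows "finite (carrier G) \<and> int (card (carrier G)) \<le> int (card A) + excess A + 1"
proof -
  have "\<not> admissible A" using kappa_le_excess assms(4) by fastforce
  thus ?thesis using not_admissible_bound assms(1-3) by blast
qed

text \<open>Translates: since \<open>G\<close> is abelian, \<open>(Ag)S = (AS)g\<close>, so translation preserves size,
  excess and admissibility.\<close>
lemma shift_carrier: "g \<in> carrier G \<Longrightarrow> A \<subseteq> carrier G \<Longrightarrow> shift g A \<subseteq> carrier G"
  unfolding shift_def by auto

lemma card_shift: "g \<in> carrier G \<Longrightarrow> A \<subseteq> carrier G \<Longrightarrow> card (shift g A) = card A"
  unfolding shift_def by (rule card_image, rule inj_on_subset[OF inj_on_shift]) auto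

lemma finite_shift: "finite A \<Longrightarrow> finite (shift g A)"
  unfolding shift_def by auto

lemma shift_one: "A \<subseteq> carrier G \<Longrightarrow> shift \<one> A = A"
  unfolding shift_def by (force simp: image_iff)

lemma mem_shift_self: "g \<in> carrier G \<Longrightarrow> \<one> \<in> A \<Longrightarrow> g \<in> shift g A"
  unfolding shift_def by (force simp: image_iff)

lemma mem_shift_comm: "a \<in> A \<Longrightarrow> a \<in> carrier G \<Longrightarrow> g \<in> carrier G \<Longrightarrow> g \<otimes> a \<in> shift g A"
  unfolding shift_def using m_comm by (metis image_eqI)

lemma img_shift: "g \<in> carrier G \<Longrightarrow> A \<subseteq> carrier G \<Longrightarrow> img (shift g A) = shift g (img A)"
proof -
  assume g: "g \<in> carrier G" and A: "A \<subseteq> carrier G"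
  have "(a \<otimes> g) \<otimes> s = (a \<otimes> s) \<otimes> g" if "a \<in> A" "s \<in> S" for a s
  proof -
    have "a \<in> carrier G" "s \<in> carrier G" using that A S_carrier by auto
    thus ?thesis using g by (simp add: m_ac)
  qed
  thus ?thesis unfolding shift_def by (force simp: img_iff)
qed

lemma excess_shift: "g \<in> carrier G \<Longrightarrow> A \<subseteq> carrier G \<Longrightarrow> excess (shift g A) = excess A"
  unfolding excess_def by (simp add: img_shift card_shift img_carrier)

lemma shift_carrier_eq: "g \<in> carrier G \<Longrightarrow> shift g (carrier G) = carrier G"
proof
  assume g: "g \<in> carrier G"
  show "shift g (carrier G) \<subseteq> carrier G" using g unfolding shift_def by auto
  show "carrier G \<subseteq> shift g (carrier G)"
  proof
    fix x assume x: "x \<in> carrier G"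
    hence "x = (x \<otimes> inv g) \<otimes> g" using g by (simp add: m_assoc)
    thus "x \<in> shift g (carrier G)" unfolding shift_def using x g by blast
  qed
qed

lemma admissible_shift: "admissible A \<Longrightarrow> g \<in> carrier G \<Longrightarrow> admissible (shift g A)"
proof -
  assume A: "admissible A" and g: "g \<in> carrier G"
  have sub: "A \<subseteq> carrier G" "img A \<subseteq> carrier G" using A admissible_iff img_carrier by auto
  have "shift g (carrier G - img A) = shift g (carrier G) - shift g (img A)"
    unfolding shift_def by (rule inj_on_image_set_diff[OF inj_on_shift[OF g]]) (use sub in auto)
  hence "carrier G - img (shift g A) = shift g (carrier G - img A)"
    by (simp add: img_shift[OF g sub(1)] shift_carrier_eq[OF g])
  moreover have "card_ge (shift g (carrier G - img A)) 2"
    unfolding shift_def using A admissible_iff inj_on_subset[OF inj_on_shift[OF g]]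
    by (intro card_ge_image) auto
  ultimately show ?thesis using A g admissible_iff shift_carrier card_shift finite_shift by auto
qed

definition reflect :: "'a \<Rightarrow> 'a \<Rightarrow> 'a" where
  "reflect g x = g \<otimes> inv x"

lemma reflect_closed: "g \<in> carrier G \<Longrightarrow> x \<in> carrier G \<Longrightarrow> reflect g x \<in> carrier G"
  unfolding reflect_def by simp

lemma reflect_reflect: "g \<in> carrier G \<Longrightarrow> x \<in> carrier G \<Longrightarrow> reflect g (reflect g x) = x"
  unfolding reflect_def by (simp add: inv_mult m_assoc[symmetric])

lemma inj_on_reflect: "g \<in> carrier G \<Longrightarrow> inj_on (reflect g) (carrier G)"
  unfolding reflect_def using inj_on_div .

lemma card_reflect: "g \<in> carrier G \<Longrightarrow> A \<subseteq> carrier G \<Longrightarrow> card (reflect g ` A) = card A"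
  using card_image inj_on_subset inj_on_reflect by metis

lemma reflect_image_carrier: "g \<in> carrier G \<Longrightarrow> A \<subseteq> carrier G \<Longrightarrow> reflect g ` A \<subseteq> carrier G"
  using reflect_closed by blast

text \<open>Duality: the image of the reflected complement \<open>g (G - QS)\<^sup>-\<^sup>1\<close> misses \<open>g Q\<^sup>-\<^sup>1\<close>,
  because \<open>g c\<^sup>-\<^sup>1 s = g q\<^sup>-\<^sup>1\<close> would give \<open>c = q s \<in> QS\<close>.\<close>
lemma img_reflect_complement:
  assumes g: "g \<in> carrier G" and Q: "Q \<subseteq> carrier G"
  shows "img (reflect g ` (carrier G - img Q)) \<subseteq> carrier G - reflect g ` Q"
proof
  fix w assume "w \<in> img (reflect g ` (carrier G - img Q))"
  then obtain y s where y: "y \<in> reflect g ` (carrier G - img Q)" and s: "s \<in> S" and "w = y \<otimes> s"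
    unfolding img_iff by blast
  then obtain c where c: "c \<in> carrier G" "c \<notin> img Q" and w: "w = g \<otimes> inv c \<otimes> s"
    unfolding reflect_def by blast
  have sG: "s \<in> carrier G" using s S_carrier by blast
  have "w \<noteq> reflect g q" if q: "q \<in> Q" for q
  proof
    assume "w = reflect g q"
    have qG: "q \<in> carrier G" using q Q by blast
    hence "inv c \<otimes> s = inv q"
      using \<open>w = reflect g q\<close> w c(1) sG g unfolding reflect_def by (simp add: m_assoc)
    hence "c = c \<otimes> (inv c \<otimes> s) \<otimes> q" using c(1) qG by (simp add: m_assoc)
    also have "\<dots> = q \<otimes> s"
      using c(1) sG qG by (simp add: m_assoc[symmetric] m_comm)
    finally have "c \<in> img Q" using q s unfolding img_iff by blast
    thus False using c(2) by blast
  qed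
  thus "w \<in> carrier G - reflect g ` Q" using w c(1) sG g by auto
qed

lemma reflected_complement:
  assumes fin: "finite (carrier G)" and g: "g \<in> carrier G" and Q: "Q \<subseteq> carrier G"
  shows "card (reflect g ` (carrier G - img Q)) = card (carrier G) - card (img Q)"
    and "excess (reflect g ` (carrier G - img Q)) \<le> excess Q"
proof -
  define Y where "Y = reflect g ` (carrier G - img Q)"
  have QSG: "img Q \<subseteq> carrier G" and finQ: "finite Q"
    using img_carrier Q fin finite_subset by auto
  have card_Y: "card Y = card (carrier G) - card (img Q)"
    unfolding Y_def using card_reflect[OF g, of "carrier G - img Q"] card_Diff_subset[OF _ QSG]
      finite_img[OF finQ] by simp
  thus "card (reflect g ` (carrier G - img Q)) = card (carrier G) - card (img Q)" unfolding Y_def .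
  have "card (img Y) \<le> card (carrier G - reflect g ` Q)"
    using card_mono[OF _ img_reflect_complement[OF g Q, folded Y_def]] fin by blast
  also have "\<dots> = card (carrier G) - card Q"
    using card_Diff_subset[OF _ reflect_image_carrier[OF g Q]] card_reflect[OF g Q] finQ by simp
  finally have "card (img Y) \<le> card (carrier G) - card Q" .
  moreover have "card Q \<le> card (carrier G)" "card (img Q) \<le> card (carrier G)"
    using Q QSG fin card_mono by auto
  ultimately show "excess (reflect g ` (carrier G - img Q)) \<le> excess Q"
    unfolding excess_def Y_def[symmetric] using card_Y by linarith
qed

end

locale cayley_atom = abelian_cayley +
  fixes M :: "'a set"
  assumes atom: "k_atom G S 2 M" and one_in_M: "\<one> \<in> M"
    and kappa_le_card_S: "kappa2 \<le> card S"
begin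

lemma admissible_M: "admissible M"
  using atom unfolding k_atom_def k_fragment_def by blast

lemma M_carrier: "M \<subseteq> carrier G" and finite_M: "finite M" and two_le_card_M: "2 \<le> card M"
  using admissible_M admissible_iff by auto

lemma excess_M: "excess M = int kappa2"
  using atom unfolding k_atom_def k_fragment_def using card_boundary M_carrier finite_M by metis

text \<open>Minimality of the atom: admissible sets smaller than \<open>M\<close> are not fragments.\<close>
lemma excess_smaller_than_atom:
  assumes Q: "admissible Q" "card Q < card M"
  shows "int kappa2 + 1 \<le> excess Q"
proof (rule ccontr)
  assume "\<not> int kappa2 + 1 \<le> excess Q"
  hence "excess Q = int kappa2" using kappa_le_excess[OF Q(1)] by linarith
  hence "card (cay_boundary G S Q) = kappa2" using card_boundary Q admissible_iff by (metis of_nat_eq_iff)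
  hence "k_fragment G S 2 Q" using Q unfolding k_fragment_def by blast
  thus False using atom Q(2) unfolding k_atom_def by fastforce
qed

text \<open>In a finite group, an admissible set \<open>Q\<close> of excess at most \<open>\<kappa>\<^sub>2\<close> leaves at least
  \<open>|M|\<close> elements outside \<open>QS\<close>: the set \<open>(G - QS)\<^sup>-\<^sup>1\<close> is a fragment, hence not smaller than \<open>M\<close>.\<close>
lemma dual_bound:
  assumes fin: "finite (carrier G)" and Q: "admissible Q" and exc: "excess Q \<le> int kappa2"
  shows "card M + card (img Q) \<le> card (carrier G)"
proof -
  have QG: "Q \<subseteq> carrier G" "finite Q" "2 \<le> card Q" and outside: "card_ge (carrier G - img Q) 2"
    using Q admissible_iff by auto
  define Y where "Y = reflect \<one> ` (carrier G - img Q)"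
  note card_Y = reflected_complement(1)[OF fin one_closed QG(1), folded Y_def]
  note exc_Y = reflected_complement(2)[OF fin one_closed QG(1), folded Y_def]
  have YG: "Y \<subseteq> carrier G" unfolding Y_def using reflect_image_carrier by blast
  have invQG: "reflect \<one> ` Q \<subseteq> carrier G" using reflect_image_carrier QG(1) by simp
  have YS: "img Y \<subseteq> carrier G - reflect \<one> ` Q"
    unfolding Y_def using img_reflect_complement QG by simp
  have "admissible Y"
  proof -
    have "card_ge (reflect \<one> ` Q) 2" unfolding card_ge_def using card_reflect QG by auto
    moreover have "reflect \<one> ` Q \<subseteq> carrier G - img Y" using YS invQG by blast
    ultimately have "card_ge (carrier G - img Y) 2" using card_ge_mono by blast
    moreover have "2 \<le> card Y"
      using card_ge_finite[OF outside] fin card_Y card_Diff_subset[OF finite_img[OF QG(2)]]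
        img_carrier[OF QG(1)] by simp
    ultimately show ?thesis using admissible_iff YG fin finite_subset by blast
  qed
  hence "excess Y = int kappa2" using kappa_le_excess exc_Y exc by fastforce
  hence "card (cay_boundary G S Y) = kappa2"
    using card_boundary \<open>admissible Y\<close> admissible_iff by (metis of_nat_eq_iff)
  hence "k_fragment G S 2 Y" using \<open>admissible Y\<close> unfolding k_fragment_def by blast
  hence "card M \<le> card Y" using atom unfolding k_atom_def by blast
  thus ?thesis using card_Y card_mono[OF fin img_carrier[OF QG(1)]] by linarith
qed

lemma large_image_bound:
  assumes fin: "finite (carrier G)" and W: "W \<subseteq> carrier G" "finite W" "2 \<le> card W"
    and exc: "excess W \<le> int kappa2"
    and gap: "int (card (carrier G)) < int (card M) + int (card W) + excess W"
  shows "int (card (carrier G)) \<le> int (card W) + excess W + 1"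
proof -
  have "\<not> admissible W"
  proof
    assume "admissible W"
    hence "card M + card (img W) \<le> card (carrier G)" using dual_bound[OF fin _ exc] by simp
    thus False using gap card_img_eq[of W] by linarith
  qed
  thus ?thesis using not_admissible_bound[OF W] by blast
qed

lemma translate_M:
  assumes "g \<in> carrier G"
  shows "admissible (shift g M)" "excess (shift g M) = int kappa2" "card (shift g M) = card M"
    "shift g M \<subseteq> carrier G" "finite (shift g M)"
  using admissible_shift[OF admissible_M assms] excess_shift[OF assms M_carrier] excess_M
    card_shift[OF assms M_carrier] shift_carrier[OF assms M_carrier] finite_shift[OF finite_M]
  by auto

lemma card_carrier_lower_bound:
  assumes "finite (carrier G)" shows "2 * card M + kappa2 \<le> card (carrier G)"
proof -
  have "card M + card (img M) \<le> card (carrier G)"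
    using dual_bound[OF assms admissible_M] excess_M by simp
  thus ?thesis using excess_M card_img_eq[of M] by linarith
qed

text \<open>The intersection theorem for atoms: two distinct translates of \<open>M\<close> meet in at most
  one element. Otherwise their intersection would be a smaller admissible set, and by
  submodularity their union would have excess below \<open>\<kappa>\<^sub>2\<close> while being too small to cover the group.\<close>
theorem translate_intersection:
  assumes g: "g \<in> carrier G" and moved: "shift g M \<noteq> M"
  shows "card (M \<inter> shift g M) \<le> 1"
proof (rule ccontr)
  assume "\<not> card (M \<inter> shift g M) \<le> 1"
  hence two: "2 \<le> card (M \<inter> shift g M)" by simp
  define B where "B = shift g M"
  note B = translate_M[OF g, folded B_def]
  have "card (M \<inter> B) < card M"
  proof (rule ccontr)
    assume "\<not> card (M \<inter> B) < card M"
    hence "M \<inter> B = M"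
      using card_mono[OF finite_M, of "M \<inter> B"] card_subset_eq[OF finite_M, of "M \<inter> B"] by auto
    hence "M = B" using card_subset_eq[OF B(5)] B(3) by (metis Int_lower2)
    thus False using moved B_def by simp
  qed
  moreover have "admissible (M \<inter> B)"
    using admissible_subset[OF admissible_M, of "M \<inter> B"] two B_def by auto
  ultimately have "int kappa2 + 1 \<le> excess (M \<inter> B)" using excess_smaller_than_atom by blast
  hence exc_U: "excess (M \<union> B) \<le> int kappa2 - 1"
    using excess_submodular[OF finite_M B(5)] excess_M B(2) by linarith
  have card_U: "card (M \<union> B) + card (M \<inter> B) = 2 * card M"
    using card_Un_Int[OF finite_M B(5)] B(3) by simp
  have "2 \<le> card (M \<union> B)"
    using two_le_card_M card_mono[of "M \<union> B" M] finite_M B(5) by auto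
  hence "finite (carrier G) \<and> int (card (carrier G)) \<le> int (card (M \<union> B)) + excess (M \<union> B) + 1"
    using excess_below_kappa_bound[of "M \<union> B"] M_carrier B finite_M exc_U by auto
  thus False using card_carrier_lower_bound card_U two B_def exc_U by fastforce
qed

end

locale cayley_nonsubgroup_atom = cayley_atom +
  assumes not_subgroup: "\<not> subgroup M G"
begin

lemma exists_moving_translate: "\<exists>x\<in>M. shift x M \<noteq> M"
proof (rule ccontr)
  assume "\<not> (\<exists>x\<in>M. shift x M \<noteq> M)"
  hence stable: "\<And>x. x \<in> M \<Longrightarrow> shift x M = M" by blast
  have "subgroup M G"
  proof (rule subgroupI)
    show "M \<subseteq> carrier G" "M \<noteq> {}" using M_carrier one_in_M by auto
    show "a \<otimes> b \<in> M" if "a \<in> M" "b \<in> M" for a b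
      using stable[OF that(2)] that(1) unfolding shift_def by blast
    show "inv a \<in> M" if a: "a \<in> M" for a
    proof -
      obtain m where m: "m \<in> M" "\<one> = m \<otimes> a"
        using stable[OF a] one_in_M unfolding shift_def by force
      hence "inv a = m" using inv_equality[of m a] a M_carrier by auto
      thus ?thesis using m by simp
    qed
  qed
  thus False using not_subgroup by blast
qed

text \<open>If \<open>Mg = M\<close>
  with \<open>g \<noteq> \<one>\<close>, a moving translate \<open>Mx\<close> would contain both \<open>x\<close> and \<open>xg\<close>.\<close>
lemma translate_intersection_nontrivial:
  assumes g: "g \<in> carrier G" "g \<noteq> \<one>"
  shows "card (M \<inter> shift g M) \<le> 1"
proof (cases "shift g M = M")
  case False
  thus ?thesis using translate_intersection[OF g(1)] by blast
next
  case stable: True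
  obtain x where x: "x \<in> M" "shift x M \<noteq> M" using exists_moving_translate by blast
  have xG: "x \<in> carrier G" using x M_carrier by blast
  have "g \<in> M" using stable mem_shift_self[OF g(1) one_in_M] by simp
  hence "x \<otimes> g \<in> M \<inter> shift x M"
    using stable x g M_carrier mem_shift_comm[of g M x] unfolding shift_def by blast
  moreover have "x \<in> M \<inter> shift x M" using x mem_shift_self[OF xG one_in_M] by blast
  moreover have "x \<noteq> x \<otimes> g" using g xG by simp
  ultimately have "2 \<le> card (M \<inter> shift x M)"
    using card_mono[OF _ insert_subset[THEN iffD2], of "M \<inter> shift x M" x "{x \<otimes> g}"] finite_M
    by auto
  thus ?thesis using translate_intersection[OF xG x(2)] by linarith
qed

lemma translate_meet_unique:
  assumes g: "g \<in> carrier G" "g \<noteq> \<one>" and ab: "a \<in> M \<inter> shift g M" "b \<in> M \<inter> shift g M"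
  shows "a = b"
  using translate_intersection_nontrivial[OF g] finite_M ab
  by (metis One_nat_def card_le_Suc0_iff_eq finite_Int)

theorem sidon:
  assumes M: "a \<in> M" "b \<in> M" "c \<in> M" "d \<in> M" and eq: "a \<otimes> b = c \<otimes> d"
  shows "a = c \<or> a = d"
proof (rule ccontr)
  assume ne: "\<not> (a = c \<or> a = d)"
  have G: "a \<in> carrier G" "b \<in> carrier G" "c \<in> carrier G" "d \<in> carrier G" using M M_carrier by auto
  define g where "g = a \<otimes> inv d"
  have gG: "g \<in> carrier G" using G g_def by simp
  have "g \<noteq> \<one>" using ne G unfolding g_def by (metis inv_closed inv_equality inv_inv r_inv)
  have "a = d \<otimes> g" using G unfolding g_def using m_lcomm[of d a "inv d"] by simp
  hence "a \<in> shift g M" using M unfolding shift_def by blast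
  moreover have "b \<otimes> g = c"
    using eq G unfolding g_def by (metis inv_closed m_assoc m_comm r_inv r_one)
  hence "c \<in> shift g M" using M unfolding shift_def by (metis image_eqI)
  ultimately have "a = c" using translate_meet_unique[OF gG \<open>g \<noteq> \<one>\<close>] M by blast
  thus False using ne by simp
qed

text \<open>The mirror images \<open>gM\<^sup>-\<^sup>1\<close> of the atom, and the outside \<open>C = G - MS\<close> of its image.\<close>
definition mirror :: "'a \<Rightarrow> 'a set" where
  "mirror g = reflect g ` M"

abbreviation outside :: "'a set" where
  "outside \<equiv> carrier G - img M"

lemma mirror_carrier: "g \<in> carrier G \<Longrightarrow> mirror g \<subseteq> carrier G"
  unfolding mirror_def using reflect_image_carrier M_carrier by blast

lemma card_mirror: "g \<in> carrier G \<Longrightarrow> card (mirror g) = card M"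
  unfolding mirror_def using card_reflect M_carrier by blast

lemma finite_mirror: "finite (mirror g)"
  unfolding mirror_def using finite_M by blast

text \<open>By the Sidon property, distinct mirror images share at most one element.\<close>
lemma mirror_intersection:
  assumes g: "g \<in> carrier G" and h: "h \<in> carrier G" and gh: "g \<noteq> h"
    and u: "u \<in> mirror g" "u \<in> mirror h" and v: "v \<in> mirror g" "v \<in> mirror h"
  shows "u = v"
proof -
  obtain m1 m2 m3 m4 where m: "m1 \<in> M" "m2 \<in> M" "m3 \<in> M" "m4 \<in> M"
    and e: "u = g \<otimes> inv m1" "u = h \<otimes> inv m2" "v = g \<otimes> inv m3" "v = h \<otimes> inv m4"
    using u v unfolding mirror_def reflect_def by blast
  have mG: "m1 \<in> carrier G" "m2 \<in> carrier G" "m3 \<in> carrier G" "m4 \<in> carrier G" using m M_carrier by auto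
  have e1: "g \<otimes> m2 = h \<otimes> m1" using e(1,2) div_eq_div_iff[of g m1 h m2] g h mG by simp
  have e2: "g \<otimes> m4 = h \<otimes> m3" using e(3,4) div_eq_div_iff[of g m3 h m4] g h mG by simp
  have "(g \<otimes> h) \<otimes> (m2 \<otimes> m3) = (g \<otimes> m2) \<otimes> (h \<otimes> m3)" using g h mG by (simp add: m_ac)
  also have "\<dots> = (h \<otimes> m1) \<otimes> (g \<otimes> m4)" using e1 e2 by simp
  also have "\<dots> = (g \<otimes> h) \<otimes> (m1 \<otimes> m4)" using g h mG by (simp add: m_ac)
  finally have "m1 \<otimes> m4 = m2 \<otimes> m3"
    using inj_onD[OF inj_on_lmult, of "g \<otimes> h" "m2 \<otimes> m3" "m1 \<otimes> m4"] g h mG by simp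
  hence "m1 = m2 \<or> m1 = m3" using sidon[OF m(1,4,2,3)] by simp
  thus ?thesis
  proof
    assume "m1 = m2"
    hence "g = h" using e1 g h mG by (metis m_comm right_cancel)
    thus ?thesis using gh by simp
  qed (use e in simp)
qed

lemma card_mirror_union:
  assumes g: "g \<in> carrier G" and h: "h \<in> carrier G" and gh: "g \<noteq> h"
  shows "2 * card M - 1 \<le> card (mirror g \<union> mirror h)"
proof -
  have "card (mirror g \<inter> mirror h) \<le> 1"
    using card_le_Suc0_iff_eq[of "mirror g \<inter> mirror h"] mirror_intersection[OF g h gh] finite_mirror
    by auto
  moreover have "card (mirror g \<union> mirror h) + card (mirror g \<inter> mirror h) = card (mirror g) + card (mirror h)"
    using card_Un_Int[OF finite_mirror finite_mirror] by simp
  ultimately show ?thesis using card_mirror g h by simp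
qed

lemma card_carrier_decomposition:
  assumes "finite (carrier G)"
  shows "int (card (carrier G)) = int (card M) + int kappa2 + int (card outside)"
proof -
  have "img M \<subseteq> carrier G" using img_carrier M_carrier by blast
  hence "card (carrier G) = card (img M) + card outside"
    using card_Diff_subset[OF finite_img[OF finite_M]] card_mono[OF assms] by fastforce
  thus ?thesis using card_img_eq[of M] excess_M by linarith
qed

lemma two_le_card_outside: "finite (carrier G) \<Longrightarrow> 2 \<le> card outside"
  using admissible_M card_ge_finite unfolding admissible_iff by blast

lemma reflected_outside:
  assumes fin: "finite (carrier G)" and g: "g \<in> carrier G"
  shows "img (reflect g ` outside) \<inter> mirror g = {}" "excess (reflect g ` outside) \<le> int kappa2"
  using img_reflect_complement[OF g M_carrier] reflected_complement(2)[OF fin g M_carrier] excess_M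
  unfolding mirror_def by auto

text \<open>A mirror image meeting the outside in two elements lies entirely in the outside.
  Otherwise the set \<open>M \<inter> g C\<^sup>-\<^sup>1\<close>, a reflection of \<open>C \<inter> gM\<^sup>-\<^sup>1\<close>, is admissible and smaller
  than \<open>M\<close>; submodularity then makes \<open>(M \<union> g C\<^sup>-\<^sup>1) S\<close> too small to miss \<open>C \<inter> gM\<^sup>-\<^sup>1\<close>.\<close>
lemma mirror_inside_outside:
  assumes fin: "finite (carrier G)" and g: "g \<in> carrier G" and two: "2 \<le> card (outside \<inter> mirror g)"
  shows "mirror g \<subseteq> outside"
proof (rule ccontr)
  assume not_inside: "\<not> mirror g \<subseteq> outside"
  define V where "V = reflect g ` outside"
  have VG: "V \<subseteq> carrier G" unfolding V_def using reflect_image_carrier[OF g] by blast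
  have finV: "finite V" using VG fin finite_subset by blast
  have "reflect g ` V = (\<lambda>x. x) ` outside"
    unfolding V_def image_image by (rule image_cong) (simp_all add: reflect_reflect[OF g])
  hence "reflect g ` V = outside" by simp
  hence reflect_MV: "reflect g ` (M \<inter> V) = mirror g \<inter> outside"
    unfolding mirror_def using inj_on_image_Int[OF inj_on_reflect[OF g] M_carrier VG] by simp
  have card_MV: "card (M \<inter> V) = card (outside \<inter> mirror g)"
    using card_reflect[OF g le_infI1[OF M_carrier], of V] reflect_MV by (simp add: Int_commute)
  have "M \<inter> V \<noteq> M" using reflect_MV not_inside unfolding mirror_def by blast
  hence "card (M \<inter> V) < card M" using psubset_card_mono[OF finite_M] by blast
  moreover have "admissible (M \<inter> V)" using admissible_subset[OF admissible_M] card_MV two by auto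
  ultimately have "int kappa2 + 1 \<le> excess (M \<inter> V)" using excess_smaller_than_atom by blast
  hence exc: "excess (M \<union> V) < int kappa2"
    using excess_submodular[OF finite_M finV] reflected_outside(2)[OF fin g, folded V_def] excess_M
    by linarith
  have "2 \<le> card (M \<union> V)" using two_le_card_M card_mono[of "M \<union> V" M] finite_M finV by auto
  hence bound: "int (card (carrier G)) \<le> int (card (img (M \<union> V))) + 1"
    using excess_below_kappa_bound[OF _ _ _ exc] M_carrier VG finite_M finV card_img_eq by force
  have "img (M \<union> V) \<subseteq> carrier G - (outside \<inter> mirror g)"
    using img_Un img_carrier[OF VG] img_carrier[OF M_carrier] reflected_outside(1)[OF fin g] V_def
    by blast
  hence "card (img (M \<union> V)) \<le> card (carrier G - (outside \<inter> mirror g))"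
    using card_mono[OF finite_Diff[OF fin]] by blast
  also have "\<dots> = card (carrier G) - card (outside \<inter> mirror g)"
    using card_Diff_subset[of "outside \<inter> mirror g" "carrier G"] finite_mirror by blast
  finally have "card (img (M \<union> V)) \<le> card (carrier G) - card (outside \<inter> mirror g)" .
  moreover have "card (outside \<inter> mirror g) \<le> card (carrier G)" by (rule card_mono[OF fin]) blast
  ultimately show False using bound two by linarith
qed

lemma collision_mirror:
  assumes fin: "finite (carrier G)" and c: "c \<in> outside" "c' \<in> outside" and m: "m \<in> M" "m' \<in> M"
    and eq: "c \<otimes> inv m = c' \<otimes> inv m'" and ne: "c \<noteq> c'"
  shows "\<exists>h\<in>carrier G. mirror h \<subseteq> outside \<and> c \<in> mirror h"
proof -
  have G: "c \<in> carrier G" "c' \<in> carrier G" "m \<in> carrier G" "m' \<in> carrier G" using c m M_carrier by auto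
  define h where "h = c \<otimes> m'"
  have hG: "h \<in> carrier G" using G h_def by simp
  have "c = h \<otimes> inv m'" using G unfolding h_def by (simp add: m_assoc)
  hence c_in: "c \<in> mirror h" using m unfolding mirror_def reflect_def by blast
  have "c \<otimes> m' = c' \<otimes> m" using eq div_eq_div_iff[of c m c' m'] G by simp
  hence "c' = h \<otimes> inv m" using G unfolding h_def by (simp add: m_assoc)
  hence "c' \<in> mirror h" using m unfolding mirror_def reflect_def by blast
  hence "{c, c'} \<subseteq> outside \<inter> mirror h" using c c_in by blast
  hence "2 \<le> card (outside \<inter> mirror h)" using card_mono[of "outside \<inter> mirror h" "{c, c'}"] ne fin by auto
  thus ?thesis using mirror_inside_outside[OF fin hG] hG c_in by blast
qed

definition quotients :: "'a set \<Rightarrow> 'a set" where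
  "quotients A = (\<lambda>(c, m). c \<otimes> inv m) ` (A \<times> M)"

lemma quotients_Un: "quotients (A \<union> B) = quotients A \<union> quotients B"
  unfolding quotients_def by blast

text \<open>\<open>CM\<^sup>-\<^sup>1\<close> avoids \<open>S\<close>, since \<open>c m\<^sup>-\<^sup>1 = s\<close> would put \<open>c = ms\<close> into \<open>MS\<close>.\<close>
lemma card_quotients_outside:
  assumes fin: "finite (carrier G)"
  shows "card (quotients outside) + card S \<le> card (carrier G)"
proof -
  have disj: "quotients outside \<inter> S = {}"
  proof (rule ccontr)
    assume "quotients outside \<inter> S \<noteq> {}"
    then obtain c m where cm: "c \<in> outside" "m \<in> M" "c \<otimes> inv m \<in> S"
      unfolding quotients_def by auto
    have G: "c \<in> carrier G" "m \<in> carrier G" using cm M_carrier by auto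
    have "c = m \<otimes> (c \<otimes> inv m)" using G by (simp add: m_lcomm)
    hence "c \<in> img M" using cm unfolding img_iff by blast
    thus False using cm by blast
  qed
  have "quotients outside \<subseteq> carrier G" unfolding quotients_def using M_carrier by auto
  hence "card (quotients outside \<union> S) \<le> card (carrier G)" using card_mono[OF fin] S_carrier by blast
  moreover have "finite (quotients outside)" unfolding quotients_def using fin finite_M by simp
  ultimately show ?thesis using card_Un_disjoint[OF _ finite_S disj] by simp
qed

text \<open>A part of the outside is isolated if it avoids every mirror image contained in the outside.
  By \<open>collision_mirror\<close>, quotients of isolated elements determine both factors.\<close>
definition isolated :: "'a set \<Rightarrow> bool" where
  "isolated A \<longleftrightarrow> A \<subseteq> outside \<and> (\<forall>h\<in>carrier G. mirror h \<subseteq> outside \<longrightarrow> A \<inter> mirror h = {})"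

lemma isolated_quotient_eq:
  assumes fin: "finite (carrier G)" and iso: "isolated A" and c: "c \<in> A" "c' \<in> outside"
    and m: "m \<in> M" "m' \<in> M" and eq: "c \<otimes> inv m = c' \<otimes> inv m'"
  shows "c = c' \<and> m = m'"
proof -
  have cC: "c \<in> outside" using iso c unfolding isolated_def by blast
  have "c = c'"
  proof (rule ccontr)
    assume "c \<noteq> c'"
    then obtain h where "h \<in> carrier G" "mirror h \<subseteq> outside" "c \<in> mirror h"
      using collision_mirror[OF fin cC c(2) m eq] by blast
    thus False using iso c unfolding isolated_def by blast
  qed
  moreover have "m = m'"
    using eq inj_onD[OF inj_on_div] \<open>c = c'\<close> cC m M_carrier by blast
  ultimately show ?thesis by blast
qed

lemma card_quotients_isolated:
  assumes fin: "finite (carrier G)" and iso: "isolated A"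
  shows "card (quotients A) = card A * card M"
proof -
  have "inj_on (\<lambda>(c, m). c \<otimes> inv m) (A \<times> M)"
    using isolated_quotient_eq[OF fin iso] iso unfolding isolated_def by (auto intro!: inj_onI)
  thus ?thesis unfolding quotients_def using card_image card_cartesian_product by metis
qed

text \<open>If \<open>|M| \<ge> 3\<close>, some mirror image lies inside the outside: otherwise the whole outside
  is isolated and \<open>|C| |M| + |S| \<le> |G| = |M| + \<kappa>\<^sub>2 + |C|\<close> is impossible.\<close>
lemma exists_mirror_inside_outside:
  assumes fin: "finite (carrier G)" and three: "3 \<le> card M"
  shows "\<exists>g\<in>carrier G. mirror g \<subseteq> outside"
proof (rule ccontr)
  assume "\<not> (\<exists>g\<in>carrier G. mirror g \<subseteq> outside)"
  hence "isolated outside" unfolding isolated_def by blast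
  hence "card outside * card M + card S \<le> card (carrier G)"
    using card_quotients_outside[OF fin] card_quotients_isolated[OF fin] by simp
  moreover have "2 * card M \<le> card outside * card M" "card outside * 3 \<le> card outside * card M"
    using two_le_card_outside[OF fin] three by simp_all
  ultimately show False
    using card_carrier_decomposition[OF fin] kappa_le_card_S two_le_card_outside[OF fin] by linarith
qed

definition products :: "'a set" where
  "products = (\<lambda>(a, b). a \<otimes> b) ` (M \<times> M)"

lemma products_carrier: "products \<subseteq> carrier G"
  unfolding products_def using M_carrier by auto

text \<open>If \<open>gM\<^sup>-\<^sup>1 \<subseteq> C\<close> and \<open>|C| + 2 \<le> 2|M|\<close>, the rest \<open>C - gM\<^sup>-\<^sup>1\<close> of the outside is
  isolated: a second mirror image inside \<open>C\<close> would make \<open>|C| \<ge> 2|M| - 1\<close>.\<close>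
lemma isolated_remainder:
  assumes fin: "finite (carrier G)" and small_outside: "card outside + 2 \<le> 2 * card M"
    and g: "g \<in> carrier G" "mirror g \<subseteq> outside"
  shows "isolated (outside - mirror g)"
  unfolding isolated_def
proof (intro conjI ballI impI)
  fix h assume h: "h \<in> carrier G" "mirror h \<subseteq> outside"
  show "(outside - mirror g) \<inter> mirror h = {}"
  proof (rule ccontr)
    assume "(outside - mirror g) \<inter> mirror h \<noteq> {}"
    hence "h \<noteq> g" by blast
    hence "2 * card M - 1 \<le> card (mirror g \<union> mirror h)" using card_mirror_union g h by blast
    moreover have "card (mirror g \<union> mirror h) \<le> card outside"
      using card_mono[OF _ Un_least[OF g(2) h(2)]] fin by blast
    ultimately show False using small_outside two_le_card_M by linarith
  qed
qed blast

lemma reflected_products: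
  assumes g: "g \<in> carrier G"
  shows "reflect g ` products \<subseteq> quotients (mirror g)"
proof
  fix x assume "x \<in> reflect g ` products"
  then obtain a b where ab: "a \<in> M" "b \<in> M" "x = g \<otimes> inv (a \<otimes> b)"
    unfolding products_def reflect_def by auto
  have "a \<in> carrier G" "b \<in> carrier G" using ab M_carrier by auto
  hence "x = (g \<otimes> inv a) \<otimes> inv b" using ab g by (simp add: inv_mult m_assoc)
  thus "x \<in> quotients (mirror g)" unfolding quotients_def mirror_def reflect_def
    using ab by (intro image_eqI[where x = "(g \<otimes> inv a, b)"]) auto
qed

text \<open>With \<open>A = C - gM\<^sup>-\<^sup>1\<close> isolated, \<open>g(MM)\<^sup>-\<^sup>1\<close> and \<open>AM\<^sup>-\<^sup>1\<close> are disjoint parts of \<open>CM\<^sup>-\<^sup>1\<close>,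
  which itself avoids \<open>S\<close>.\<close>
lemma quotient_count:
  assumes fin: "finite (carrier G)" and g: "g \<in> carrier G" "mirror g \<subseteq> outside"
    and iso: "isolated (outside - mirror g)"
  shows "card products + card (outside - mirror g) * card M + card S \<le> card (carrier G)"
proof -
  define A where "A = outside - mirror g"
  have disj: "quotients (mirror g) \<inter> quotients A = {}"
  proof (rule ccontr)
    assume "quotients (mirror g) \<inter> quotients A \<noteq> {}"
    then obtain c' m' c m where c: "c' \<in> mirror g" "m' \<in> M" "c \<in> A" "m \<in> M"
      and eq: "c' \<otimes> inv m' = c \<otimes> inv m"
      unfolding quotients_def by auto
    hence "c = c'"
      using isolated_quotient_eq[OF fin iso[folded A_def] c(3) _ c(4) c(2) eq[symmetric]] g(2) by blast
    thus False using c A_def by blast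
  qed
  have "mirror g \<union> A = outside" using g(2) A_def by blast
  hence "quotients outside = quotients (mirror g) \<union> quotients A"
    using quotients_Un[of "mirror g" A] by simp
  hence "reflect g ` products \<union> quotients A \<subseteq> quotients outside"
    using reflected_products[OF g(1)] by blast
  moreover have "finite (quotients outside)" unfolding quotients_def using fin finite_M by simp
  ultimately have "card (reflect g ` products \<union> quotients A) \<le> card (quotients outside)"
    and fins: "finite (reflect g ` products)" "finite (quotients A)"
    using card_mono finite_subset by (blast, blast, blast)
  moreover have "reflect g ` products \<inter> quotients A = {}" using reflected_products[OF g(1)] disj by blast
  moreover have "card (reflect g ` products) = card products"
    using card_reflect[OF g(1) products_carrier] .
  ultimately show ?thesis
    using card_Un_disjoint[OF fins] card_quotients_isolated[OF fin iso] card_quotients_outside[OF fin]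
    unfolding A_def by simp
qed

theorem counting:
  assumes fin: "finite (carrier G)" and three: "3 \<le> card M"
    and small_outside: "card outside + 2 \<le> 2 * card M"
    and large_products: "3 * card M \<le> card products + 3"
  shows "card M = 3 \<and> kappa2 = card S \<and> card (carrier G) = card S + 6"
proof -
  obtain g where g: "g \<in> carrier G" "mirror g \<subseteq> outside"
    using exists_mirror_inside_outside[OF fin three] by blast
  define A where "A = outside - mirror g"
  have "card outside = card M + card A"
    using card_Diff_subset[OF finite_mirror g(2)] card_mirror[OF g(1)] card_mono[OF _ g(2)] fin
    unfolding A_def by simp
  moreover have "card products + card A * card M + card S \<le> card (carrier G)"
    using quotient_count[OF fin g isolated_remainder[OF fin small_outside g]] unfolding A_def .
  moreover have "card A * 3 \<le> card A * card M" using three by simp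
  ultimately show ?thesis
    using card_carrier_decomposition[OF fin] kappa_le_card_S large_products three by linarith
qed

text \<open>Translates of \<open>M\<close> by elements of \<open>M\<close>: by the Sidon property, \<open>Ma \<inter> Mc \<subseteq> {ac}\<close>
  for distinct \<open>a, c \<in> M\<close>, so in particular \<open>M \<inter> Mx = {x}\<close>; all of them lie in \<open>MM\<close>.\<close>
lemma translates_meet:
  assumes a: "a \<in> M" and c: "c \<in> M" and ac: "a \<noteq> c"
  shows "shift a M \<inter> shift c M \<subseteq> {a \<otimes> c}"
proof
  fix w assume "w \<in> shift a M \<inter> shift c M"
  then obtain p q where pq: "p \<in> M" "q \<in> M" "w = p \<otimes> a" "w = q \<otimes> c" unfolding shift_def by blast
  have G: "p \<in> carrier G" "q \<in> carrier G" "a \<in> carrier G" "c \<in> carrier G" using pq a c M_carrier by auto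
  have "p = q \<or> p = c" using sidon[OF pq(1) a pq(2) c] pq by simp
  thus "w \<in> {a \<otimes> c}"
  proof
    assume "p = q"
    hence "a = c" using pq G inj_onD[OF inj_on_lmult, of p a c] by simp
    thus ?thesis using ac by simp
  qed (use pq G m_comm in simp)
qed

lemma M_meet_translate:
  assumes x: "x \<in> M" "x \<noteq> \<one>"
  shows "M \<inter> shift x M = {x}"
proof -
  have xG: "x \<in> carrier G" using x M_carrier by auto
  have "shift \<one> M \<inter> shift x M \<subseteq> {\<one> \<otimes> x}" using translates_meet[OF one_in_M x(1)] x by metis
  moreover have "x \<in> M \<inter> shift x M" using x mem_shift_self[OF xG one_in_M] by blast
  ultimately show ?thesis using shift_one[OF M_carrier] xG by auto
qed

lemma translate_subset_products: "x \<in> M \<Longrightarrow> shift x M \<subseteq> products"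
  unfolding shift_def products_def by auto

lemma M_subset_products: "M \<subseteq> products"
  using translate_subset_products[OF one_in_M] shift_one[OF M_carrier] by simp

definition two_translates :: "'a \<Rightarrow> 'a set" where
  "two_translates x = M \<union> shift x M"

definition three_translates :: "'a \<Rightarrow> 'a \<Rightarrow> 'a set" where
  "three_translates x y = two_translates x \<union> shift y M"

text \<open>\<open>M\<close> and \<open>Mx\<close> meet in \<open>{x}\<close>, so by submodularity \<open>M \<union> Mx\<close> has excess at most
  \<open>2\<kappa>\<^sub>2 - (|S| - 1) \<le> \<kappa>\<^sub>2 + 1\<close>.\<close>
lemma two_translates:
  assumes x: "x \<in> M" "x \<noteq> \<one>"
  shows "finite (two_translates x)" "two_translates x \<subseteq> carrier G"
    "card (two_translates x) + 1 = 2 * card M" "excess (two_translates x) \<le> int kappa2 + 1"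
proof -
  have xG: "x \<in> carrier G" using x M_carrier by auto
  note T = translate_M[OF xG]
  show "finite (two_translates x)" "two_translates x \<subseteq> carrier G"
    unfolding two_translates_def using finite_M M_carrier T by auto
  have "card (two_translates x) + card (M \<inter> shift x M) = card M + card (shift x M)"
    unfolding two_translates_def using card_Un_Int[OF finite_M T(5)] by simp
  thus "card (two_translates x) + 1 = 2 * card M" using M_meet_translate[OF x] T by simp
  have "excess (two_translates x) + excess (M \<inter> shift x M) \<le> excess M + excess (shift x M)"
    unfolding two_translates_def using excess_submodular[OF finite_M T(5)] .
  thus "excess (two_translates x) \<le> int kappa2 + 1"
    using M_meet_translate[OF x] excess_singleton[OF xG] excess_M T kappa_le_card_S by simp
qed

text \<open>Adding \<open>My\<close> meets \<open>M \<union> Mx\<close> in the two elements \<open>y, xy\<close>; as \<open>|M| \<ge> 3\<close>, this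
  intersection has excess \<open>> \<kappa>\<^sub>2\<close>, so the excess drops by at least one.\<close>
lemma three_translates:
  assumes x: "x \<in> M" "x \<noteq> \<one>" and y: "y \<in> M" "y \<noteq> \<one>" and xy: "x \<noteq> y" and three: "3 \<le> card M"
  shows "finite (three_translates x y)" "three_translates x y \<subseteq> carrier G"
    "card (three_translates x y) + 3 = 3 * card M"
    "excess (three_translates x y) \<le> excess (two_translates x) - 1"
    "three_translates x y \<subseteq> products"
proof -
  have xG: "x \<in> carrier G" and yG: "y \<in> carrier G" using x y M_carrier by auto
  note T = translate_M[OF yG]
  note U = two_translates[OF x]
  show "finite (three_translates x y)" "three_translates x y \<subseteq> carrier G"
    unfolding three_translates_def using U T by auto
  show "three_translates x y \<subseteq> products"
    unfolding three_translates_def two_translates_def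
    using M_subset_products translate_subset_products x y by blast
  have I: "two_translates x \<inter> shift y M = {y, x \<otimes> y}"
  proof
    show "two_translates x \<inter> shift y M \<subseteq> {y, x \<otimes> y}"
      using M_meet_translate[OF y] translates_meet[OF x(1) y(1) xy] unfolding two_translates_def by auto
    show "{y, x \<otimes> y} \<subseteq> two_translates x \<inter> shift y M"
      using y mem_shift_self[OF yG one_in_M] mem_shift_comm[OF y(1) yG xG]
        mem_shift_comm[OF x(1) xG yG] m_comm[OF xG yG]
      unfolding two_translates_def by auto
  qed
  have card_I: "card (two_translates x \<inter> shift y M) = 2" using I x xG yG by simp
  have "admissible (two_translates x \<inter> shift y M)"
    using admissible_subset[OF T(1), of "two_translates x \<inter> shift y M"] card_I by auto
  hence "int kappa2 + 1 \<le> excess (two_translates x \<inter> shift y M)"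
    using excess_smaller_than_atom card_I three by simp
  moreover have "excess (three_translates x y) + excess (two_translates x \<inter> shift y M)
      \<le> excess (two_translates x) + excess (shift y M)"
    unfolding three_translates_def using excess_submodular[OF U(1) T(5)] .
  ultimately show "excess (three_translates x y) \<le> excess (two_translates x) - 1" using T by simp
  have "card (three_translates x y) + card (two_translates x \<inter> shift y M)
      = card (two_translates x) + card (shift y M)"
    unfolding three_translates_def using card_Un_Int[OF U(1) T(5)] by simp
  thus "card (three_translates x y) + 3 = 3 * card M" using card_I U(3) T(3) by simp
qed

text \<open>For \<open>|M| \<ge> 4\<close> a fourth translate \<open>Mz\<close> meets \<open>W = M \<union> Mx \<union> My\<close> in two or three of
  the elements \<open>z, xz, yz\<close>; as this intersection is smaller than \<open>M\<close>, adding \<open>Mz\<close> lowers the excess.\<close>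
lemma fourth_translate:
  assumes x: "x \<in> M" "x \<noteq> \<one>" and y: "y \<in> M" "y \<noteq> \<one>" and xy: "x \<noteq> y" and four: "4 \<le> card M"
  obtains z where "z \<in> carrier G"
    "excess (three_translates x y \<union> shift z M) \<le> excess (three_translates x y) - 1"
    "card (three_translates x y \<union> shift z M) + 2 \<le> card (three_translates x y) + card M"
proof -
  have "card {\<one>, x, y} \<le> 3" by (simp add: card_insert_if)
  then obtain z where z: "z \<in> M" "z \<notin> {\<one>, x, y}"
    using exists_not_in_smaller[of "{\<one>, x, y}" M] four by force
  have xG: "x \<in> carrier G" and zG: "z \<in> carrier G" using x z M_carrier by auto
  define W where "W = three_translates x y"
  have finW: "finite W" using three_translates(1)[OF x y xy] four W_def by simp
  note T = translate_M[OF zG]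
  have "W \<inter> shift z M \<subseteq> {z, x \<otimes> z, y \<otimes> z}"
    using M_meet_translate[of z] translates_meet[OF x(1) z(1)] translates_meet[OF y(1) z(1)] z
    unfolding W_def three_translates_def two_translates_def by blast
  hence "card (W \<inter> shift z M) \<le> card {z, x \<otimes> z, y \<otimes> z}" by (simp add: card_mono)
  also have "\<dots> \<le> 3" by (simp add: card_insert_if)
  finally have small: "card (W \<inter> shift z M) < card M" using four by simp
  have "z \<in> W \<inter> shift z M" "x \<otimes> z \<in> W \<inter> shift z M"
    using z mem_shift_self[OF zG one_in_M] mem_shift_comm[OF z(1) zG xG] x
    unfolding W_def three_translates_def two_translates_def shift_def by auto
  moreover have "z \<noteq> x \<otimes> z" using x xG zG by simp
  ultimately have two: "2 \<le> card (W \<inter> shift z M)"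
    using card_mono[of "W \<inter> shift z M" "{z, x \<otimes> z}"] T(5) by auto
  have "admissible (W \<inter> shift z M)" using admissible_subset[OF T(1)] two by auto
  hence "int kappa2 + 1 \<le> excess (W \<inter> shift z M)" using excess_smaller_than_atom small by simp
  hence "excess (W \<union> shift z M) \<le> excess W - 1"
    using excess_submodular[OF finW T(5)] T(2) by linarith
  moreover have "card (W \<union> shift z M) + card (W \<inter> shift z M) = card W + card M"
    using card_Un_Int[OF finW T(5)] T(3) by simp
  ultimately show ?thesis using that[OF zG] two unfolding W_def by simp
qed

text \<open>Hence for \<open>|M| \<ge> 4\<close> the union \<open>W \<union> Mz\<close> has excess below \<open>\<kappa>\<^sub>2\<close>, so the group is finite and
  small; then \<open>W\<close> itself bounds the group by the dual bound.\<close>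
lemma order_bound_large:
  assumes x: "x \<in> M" "x \<noteq> \<one>" and y: "y \<in> M" "y \<noteq> \<one>" and xy: "x \<noteq> y" and four: "4 \<le> card M"
  shows "finite (carrier G) \<and> int (card (carrier G)) \<le> 3 * int (card M) - 2 + int kappa2"
proof -
  define W where "W = three_translates x y"
  have W: "finite W" "W \<subseteq> carrier G" "card W + 3 = 3 * card M" "excess W \<le> int kappa2"
    using three_translates[OF x y xy] two_translates(4)[OF x] four unfolding W_def by auto
  obtain z where zG: "z \<in> carrier G" and exc: "excess (W \<union> shift z M) \<le> excess W - 1"
    and card: "card (W \<union> shift z M) + 2 \<le> card W + card M"
    using fourth_translate[OF x y xy four] unfolding W_def by blast
  note T = translate_M[OF zG]
  have "card W \<le> card (W \<union> shift z M)" using card_mono W(1) T(5) by (metis Un_upper1 finite_Un)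
  hence "2 \<le> card (W \<union> shift z M)" using W(3) four by linarith
  hence "finite (carrier G) \<and>
      int (card (carrier G)) \<le> int (card (W \<union> shift z M)) + excess (W \<union> shift z M) + 1"
    using excess_below_kappa_bound[of "W \<union> shift z M"] W T exc by auto
  hence fin: "finite (carrier G)"
    and gap: "int (card (carrier G)) < int (card M) + int (card W) + excess W"
    using exc card by auto
  have "2 \<le> card W" using W(3) four by linarith
  hence "int (card (carrier G)) \<le> int (card W) + excess W + 1"
    using large_image_bound[OF fin W(2,1) _ W(4) gap] by blast
  thus ?thesis using fin W(3,4) by linarith
qed

lemma square_ne_one: "y \<in> M \<Longrightarrow> y \<noteq> \<one> \<Longrightarrow> y \<otimes> y \<noteq> \<one>"
  using sidon[of y y \<one> \<one>] one_in_M by auto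

lemma atom_of_size_three:
  assumes three: "card M = 3" and x: "x \<in> M" "x \<noteq> \<one>" and y: "y \<in> M" "y \<noteq> \<one>" and xy: "x \<noteq> y"
  shows "M = {\<one>, x, y}"
proof -
  have "{\<one>, x, y} \<subseteq> M" "card {\<one>, x, y} = 3" using x y xy one_in_M by auto
  thus ?thesis using card_subset_eq[OF finite_M] three by metis
qed

text \<open>If \<open>|M| = 3\<close>, removing any point of \<open>M\<close> leaves a smaller admissible set, whose image
  has at least \<open>2 + \<kappa>\<^sub>2 + 1 = |MS|\<close> elements; so the image does not change.\<close>
lemma img_remove_point:
  assumes three: "card M = 3" and m: "m \<in> M"
  shows "img (M - {m}) = img M"
proof -
  have card: "card (M - {m}) = 2" using three m finite_M by simp
  hence "admissible (M - {m})" using admissible_subset[OF admissible_M] by auto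
  hence "int kappa2 + 1 \<le> excess (M - {m})" using excess_smaller_than_atom card three by simp
  hence "card (img M) \<le> card (img (M - {m}))"
    using card_img_eq[of "M - {m}"] card_img_eq[of M] excess_M card three by linarith
  moreover have "img (M - {m}) \<subseteq> img M" using img_mono by blast
  ultimately show ?thesis using card_seteq finite_img finite_M by blast
qed

lemma images_overlap:
  assumes three: "card M = 3" and x: "x \<in> M" "x \<noteq> \<one>"
    and big: "int kappa2 + 1 \<le> excess (two_translates x)"
  shows "kappa2 = card S" "img M \<inter> shift x (img M) = img {x}"
proof -
  have xG: "x \<in> carrier G" using x M_carrier by auto
  define T where "T = img M"
  have TG: "T \<subseteq> carrier G" and finT: "finite T"
    unfolding T_def using img_carrier M_carrier finite_img finite_M by auto
  have card_T: "card T = 3 + kappa2" unfolding T_def using card_img_eq[of M] excess_M three by linarith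
  have "img (two_translates x) = T \<union> shift x T"
    unfolding two_translates_def T_def using img_Un img_shift[OF xG M_carrier] by simp
  hence "int (card (T \<union> shift x T)) \<ge> 6 + int kappa2"
    using card_img_eq[of "two_translates x"] big two_translates(3)[OF x] three by simp
  moreover have "card (T \<union> shift x T) + card (T \<inter> shift x T) = card T + card (shift x T)"
    using card_Un_Int[OF finT finite_shift[OF finT]] by simp
  ultimately have le: "card (T \<inter> shift x T) \<le> kappa2" using card_T card_shift[OF xG TG] by linarith
  have sub: "img {x} \<subseteq> T \<inter> shift x T"
  proof
    fix w assume "w \<in> img {x}"
    then obtain s where s: "s \<in> S" "w = x \<otimes> s" unfolding img_singleton[OF xG] by blast
    have "s \<in> T" unfolding T_def using img_mono[of "{\<one>}" M] img_one one_in_M s by blast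
    moreover have "w \<in> T" unfolding T_def img_iff using s x by blast
    ultimately show "w \<in> T \<inter> shift x T" using mem_shift_comm[of s T x] TG xG s by blast
  qed
  hence "card S \<le> card (T \<inter> shift x T)"
    using card_mono[OF _ sub] card_img_singleton[OF xG] finT by (metis finite_Int)
  thus "kappa2 = card S" using le kappa_le_card_S by linarith
  thus "img M \<inter> shift x (img M) = img {x}"
    using card_subset_eq[OF _ sub] card_img_singleton[OF xG] le \<open>card S \<le> card (T \<inter> shift x T)\<close>
      finT T_def by (metis finite_Int le_antisym)
qed

lemma img_atom_of_size_three:
  assumes three: "card M = 3" and x: "x \<in> M" "x \<noteq> \<one>" and y: "y \<in> M" "y \<noteq> \<one>" and xy: "x \<noteq> y"
  shows "img M = S \<union> img {x}" "img M = img {x} \<union> img {y}"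
proof -
  have "M - {y} = {\<one>} \<union> {x}" "M - {\<one>} = {x} \<union> {y}"
    using atom_of_size_three[OF three x y xy] xy x y by auto
  thus "img M = S \<union> img {x}" "img M = img {x} \<union> img {y}"
    using img_remove_point[OF three] y(1) one_in_M img_Un img_one by metis+
qed

text \<open>In the same situation, with \<open>M = {\<one>, x, y}\<close>, right multiplication by \<open>y\<close> permutes the
  three-element set \<open>P = S - xS\<close>, so \<open>y\<^sup>3 = \<one>\<close>.\<close>
lemma cube_one:
  assumes three: "card M = 3" and x: "x \<in> M" "x \<noteq> \<one>" and y: "y \<in> M" "y \<noteq> \<one>" and xy: "x \<noteq> y"
    and big: "int kappa2 + 1 \<le> excess (two_translates x)"
  shows "y [^] (3::nat) = \<one>"
proof -
  have xG: "x \<in> carrier G" and yG: "y \<in> carrier G" using x y M_carrier by auto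
  note overlap = images_overlap[OF three x big]
  note T1 = img_atom_of_size_three(1)[OF three x y xy]
  note T2 = img_atom_of_size_three(2)[OF three x y xy]
  define P where "P = S - img {x}"
  have finP: "finite P" and PG: "P \<subseteq> carrier G" unfolding P_def using finite_S S_carrier by auto
  have "img M = P \<union> img {x}" "P \<inter> img {x} = {}" unfolding T1 P_def by auto
  hence "card (img M) = card P + card (img {x})"
    using card_Un_disjoint[OF finP finite_img[of "{x}"]] by simp
  hence card_P: "card P = 3"
    using card_img_eq[of M] excess_M three overlap(1) card_img_singleton[OF xG] by linarith
  have "P \<subseteq> shift y P"
  proof
    fix p assume p: "p \<in> P"
    hence "p \<in> img M" "p \<notin> img {x}" using T1 P_def by auto
    then obtain q where q: "q \<in> S" "p = y \<otimes> q" using T2 img_singleton[OF yG] by auto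
    have qG: "q \<in> carrier G" using q S_carrier by blast
    have "q \<notin> img {x}"
    proof
      assume "q \<in> img {x}"
      then obtain s where s: "s \<in> S" "q = x \<otimes> s" using img_singleton[OF xG] by auto
      have sG: "s \<in> carrier G" using s S_carrier by blast
      have "p = (y \<otimes> s) \<otimes> x" using q s xG yG sG by (simp add: m_ac)
      moreover have "y \<otimes> s \<in> img M" unfolding img_iff using s y by blast
      ultimately have "p \<in> img M \<inter> shift x (img M)" using \<open>p \<in> img M\<close> unfolding shift_def by blast
      thus False using overlap(2) \<open>p \<notin> img {x}\<close> by blast
    qed
    hence "q \<in> P" using q P_def by blast
    thus "p \<in> shift y P" using q qG yG m_comm unfolding shift_def by auto
  qed
  hence "shift y P = P"
    using card_subset_eq[OF finite_shift[OF finP]] card_shift[OF yG PG] by metis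
  thus ?thesis using pow_card_of_stable_set[OF finP PG yG] card_P unfolding shift_def by simp
qed

text \<open>With \<open>M = {\<one>, x, y}\<close> and \<open>y\<^sup>3 = \<one>\<close>, the element \<open>xy\<^sup>2\<close> lies in none of \<open>M\<close>, \<open>Mx\<close>, \<open>My\<close>;
  each case contradicts the Sidon property of \<open>M\<close>.\<close>
lemma cube_product_outside:
  assumes x: "x \<in> M" "x \<noteq> \<one>" and y: "y \<in> M" "y \<noteq> \<one>" and xy: "x \<noteq> y"
    and cube: "y \<otimes> (y \<otimes> y) = \<one>"
  shows "x \<otimes> (y \<otimes> y) \<notin> three_translates x y"
proof -
  have xG: "x \<in> carrier G" and yG: "y \<in> carrier G" using x y M_carrier by auto
  have "x \<otimes> (y \<otimes> y) \<notin> M"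
  proof
    assume in_M: "x \<otimes> (y \<otimes> y) \<in> M"
    have "x \<otimes> (y \<otimes> y) \<in> shift (y \<otimes> y) M" using x(1) unfolding shift_def by blast
    moreover have "\<one> \<in> shift (y \<otimes> y) M" using y(1) cube unfolding shift_def by (metis image_eqI)
    ultimately have "x \<otimes> (y \<otimes> y) = \<one>"
      using translate_meet_unique[of "y \<otimes> y"] square_ne_one[OF y] in_M one_in_M yG by blast
    hence "x \<otimes> (y \<otimes> y) = y \<otimes> (y \<otimes> y)" using cube by simp
    thus False using xy xG yG by simp
  qed
  moreover have "x \<otimes> (y \<otimes> y) \<notin> shift x M"
  proof
    assume "x \<otimes> (y \<otimes> y) \<in> shift x M"
    then obtain m where m: "m \<in> M" "x \<otimes> (y \<otimes> y) = m \<otimes> x" unfolding shift_def by blast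
    have mG: "m \<in> carrier G" using m M_carrier by blast
    have "(y \<otimes> y) \<otimes> x = m \<otimes> x" using m(2) xG yG by (metis m_closed m_comm)
    hence "y \<otimes> y = m \<otimes> \<one>" using xG yG mG by simp
    hence "y = m \<or> y = \<one>" using sidon[OF y(1) y(1) m(1) one_in_M] by simp
    thus False using \<open>y \<otimes> y = m \<otimes> \<one>\<close> y yG by auto
  qed
  moreover have "x \<otimes> (y \<otimes> y) \<notin> shift y M"
  proof
    assume "x \<otimes> (y \<otimes> y) \<in> shift y M"
    then obtain m where m: "m \<in> M" "x \<otimes> (y \<otimes> y) = m \<otimes> y" unfolding shift_def by blast
    have mG: "m \<in> carrier G" using m M_carrier by blast
    have "(x \<otimes> y) \<otimes> y = m \<otimes> y" using m(2) xG yG by (simp add: m_assoc)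
    hence "x \<otimes> y = m \<otimes> \<one>" using xG yG mG by simp
    hence "x = m \<or> x = \<one>" using sidon[OF x(1) y(1) m(1) one_in_M] by simp
    thus False using \<open>x \<otimes> y = m \<otimes> \<one>\<close> x y xG yG by auto
  qed
  ultimately show ?thesis unfolding three_translates_def two_translates_def by blast
qed

lemma square_translate_meet:
  assumes three: "card M = 3" and x: "x \<in> M" "x \<noteq> \<one>" and y: "y \<in> M" "y \<noteq> \<one>" and xy: "x \<noteq> y"
    and cube: "y \<otimes> (y \<otimes> y) = \<one>"
  shows "three_translates x y \<inter> shift (y \<otimes> y) M = {\<one>, y \<otimes> y}"
proof
  have yG: "y \<in> carrier G" using y M_carrier by auto
  show "three_translates x y \<inter> shift (y \<otimes> y) M \<subseteq> {\<one>, y \<otimes> y}"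
  proof
    fix w assume w: "w \<in> three_translates x y \<inter> shift (y \<otimes> y) M"
    then obtain m where m: "m \<in> M" "w = m \<otimes> (y \<otimes> y)" unfolding shift_def by blast
    hence "m = \<one> \<or> m = x \<or> m = y" using atom_of_size_three[OF three x y xy] by blast
    thus "w \<in> {\<one>, y \<otimes> y}" using m w cube yG cube_product_outside[OF x y xy cube] by auto
  qed
  have "\<one> \<in> shift (y \<otimes> y) M" unfolding shift_def using cube y(1) by (metis image_eqI)
  moreover have "y \<otimes> y \<in> three_translates x y" unfolding three_translates_def shift_def using y(1) by blast
  ultimately show "{\<one>, y \<otimes> y} \<subseteq> three_translates x y \<inter> shift (y \<otimes> y) M"
    using one_in_M mem_shift_self[of "y \<otimes> y" M] yG
    unfolding three_translates_def two_translates_def by auto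
qed

lemma seven_bound:
  assumes three: "card M = 3" and x: "x \<in> M" "x \<noteq> \<one>" and y: "y \<in> M" "y \<noteq> \<one>" and xy: "x \<noteq> y"
    and cube: "y [^] (3::nat) = \<one>"
  shows "finite (carrier G) \<and> int (card (carrier G)) \<le> 7 + int kappa2"
proof -
  have yyG: "y \<otimes> y \<in> carrier G" using y M_carrier by auto
  have cube': "y \<otimes> (y \<otimes> y) = \<one>" using cube y M_carrier by (auto simp: numeral_3_eq_3 m_assoc)
  define W where "W = three_translates x y"
  define Y where "Y = shift (y \<otimes> y) M"
  note XF = three_translates[OF x y xy, folded W_def] and UF = two_translates[OF x]
  note T = translate_M[OF yyG, folded Y_def]
  have card_I: "card (W \<inter> Y) = 2"
    using square_translate_meet[OF three x y xy cube', folded W_def Y_def] square_ne_one[OF y] by simp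
  hence "admissible (W \<inter> Y)" using admissible_subset[OF T(1)] by auto
  hence "int kappa2 + 1 \<le> excess (W \<inter> Y)" using excess_smaller_than_atom card_I three by simp
  hence exc: "excess (W \<union> Y) < int kappa2"
    using excess_submodular[OF XF(1) T(5)] T(2) XF(4) UF(4) three by simp
  have "card (W \<union> Y) + card (W \<inter> Y) = card W + card Y"
    using card_Un_Int[OF XF(1) T(5)] three by simp
  hence card: "card (W \<union> Y) = 7" using card_I XF(3) T(3) three by simp
  have "finite (carrier G) \<and> int (card (carrier G)) \<le> int (card (W \<union> Y)) + excess (W \<union> Y) + 1"
    using excess_below_kappa_bound[OF _ _ _ exc] XF(1,2) T(4,5) card three by auto
  thus ?thesis using card exc by linarith
qed

text \<open>For \<open>|M| = 3\<close>: either \<open>M \<union> Mx\<close> already has excess at most \<open>\<kappa>\<^sub>2\<close>, and then \<open>M \<union> Mx \<union> My\<close>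
  bounds the group, or \<open>y\<^sup>3 = \<one>\<close> and the seven-element bound applies.\<close>
lemma order_bound_three:
  assumes three: "card M = 3" and x: "x \<in> M" "x \<noteq> \<one>" and y: "y \<in> M" "y \<noteq> \<one>" and xy: "x \<noteq> y"
  shows "finite (carrier G) \<and> int (card (carrier G)) \<le> 7 + int kappa2"
proof (cases "excess (two_translates x) \<le> int kappa2")
  case True
  note XF = three_translates[OF x y xy]
  have "excess (three_translates x y) < int kappa2" using XF(4) True three by simp
  thus ?thesis using excess_below_kappa_bound[of "three_translates x y"] XF three by fastforce
next
  case False
  thus ?thesis using seven_bound[OF three x y xy cube_one[OF three x y xy]] by simp
qed

lemma two_nontrivial_elements:
  assumes three: "3 \<le> card M"
  obtains x y where "x \<in> M" "x \<noteq> \<one>" "y \<in> M" "y \<noteq> \<one>" "x \<noteq> y"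
proof -
  obtain x where x: "x \<in> M" "x \<notin> {\<one>}" using exists_not_in_smaller[of "{\<one>}" M] three by auto
  have "card {\<one>, x} \<le> 2" by (simp add: card_insert_if)
  then obtain y where y: "y \<in> M" "y \<notin> {\<one>, x}" using exists_not_in_smaller[of "{\<one>, x}" M] three by force
  show ?thesis using that x y by blast
qed

text \<open>Combining the cases: for \<open>|M| \<ge> 3\<close> the group is finite with \<open>|G| \<le> 3|M| - 2 + \<kappa>\<^sub>2\<close>,
  and the product set \<open>MM\<close>, which contains \<open>M \<union> Mx \<union> My\<close>, has at least \<open>3|M| - 3\<close> elements.\<close>
lemma order_upper_bound:
  assumes three: "3 \<le> card M"
  shows "finite (carrier G)" "int (card (carrier G)) \<le> 3 * int (card M) - 2 + int kappa2"
    "3 * card M \<le> card products + 3"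
proof -
  obtain x y where x: "x \<in> M" "x \<noteq> \<one>" and y: "y \<in> M" "y \<noteq> \<one>" and xy: "x \<noteq> y"
    using two_nontrivial_elements[OF three] .
  have "finite (carrier G) \<and> int (card (carrier G)) \<le> 3 * int (card M) - 2 + int kappa2"
  proof (cases "card M = 3")
    case True
    thus ?thesis using order_bound_three[OF True x y xy] by simp
  next
    case False
    thus ?thesis using order_bound_large[OF x y xy] three by simp
  qed
  thus "finite (carrier G)" "int (card (carrier G)) \<le> 3 * int (card M) - 2 + int kappa2" by auto
  have "finite products" unfolding products_def using finite_M by simp
  hence "card (three_translates x y) \<le> card products"
    using card_mono three_translates(5)[OF x y xy three] by blast
  thus "3 * card M \<le> card products + 3" using three_translates(3)[OF x y xy three] by simp
qed

theorem large_atom: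
  assumes three: "3 \<le> card M"
  shows "finite (carrier G) \<and> kappa2 = card S \<and> card (carrier G) = card S + 6"
proof -
  note bound = order_upper_bound[OF three]
  have "card outside + 2 \<le> 2 * card M"
    using bound(2) card_carrier_decomposition[OF bound(1)] by linarith
  thus ?thesis using counting[OF bound(1) three _ bound(3)] bound(1) by blast
qed

end

theorem mainTheorem15:
  fixes G (structure) and S M :: "'a set"
  assumes "comm_group G"
    and "finite S" and "S \<subseteq> carrier G" and "generate G S = carrier G"
    and "\<one> \<in> S"
    and "k_separable G S 2"
    and "defect G S \<le> 0"
    and "defect G S = 0 \<Longrightarrow> finite (carrier G) \<Longrightarrow> int (card S) \<noteq> int (card (carrier G)) - 6"
    and "k_atom G S 2 M" and "\<one> \<in> M" and "\<not> subgroup M G"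
  shows "card M = 2"
proof (rule ccontr)
  assume "card M \<noteq> 2"
  have "kappa G S 2 \<le> card S" using assms(7) unfolding defect_def by simp
  then interpret cayley_nonsubgroup_atom G S M
    by (intro cayley_nonsubgroup_atom.intro cayley_atom.intro abelian_cayley.intro
        cayley_nonsubgroup_atom_axioms.intro cayley_atom_axioms.intro abelian_cayley_axioms.intro)
      (use assms in auto)
  have "3 \<le> card M" using two_le_card_M \<open>card M \<noteq> 2\<close> by simp
  hence "finite (carrier G) \<and> kappa G S 2 = card S \<and> card (carrier G) = card S + 6"
    by (rule large_atom)
  moreover from this have "defect G S = 0" unfolding defect_def by simp
  ultimately show False using assms(8) by simp
qed

end
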